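(* Let $0<b_i\le a_i\le 1$ for $i=1,2$ and let $\mathcal{R}=\mathcal{R}_1\cup\mathcal{R}_2$ with $$\mathcal{R}_1=\left\{(\lambda_1,\lambda_2)\in\mathbb{R}_{\ge0}^2:\ \frac{\lambda_1}{a_1}+\frac{(a_1-b_1)\lambda_2}{a_1 b_2}<1,\ \lambda_2<b_2\right\},\quad \mathcal{R}_2=\left\{(\lambda_1,\lambda_2)\in\mathbb{R}_{\ge0}^2:\ \frac{\lambda_2}{a_2}+\frac{(a_2-b_2)\lambda_1}{a_2 b_1}<1,\ \lambda_1<b_1\right\}.$$ If $$\frac{b_1}{a_1}+\frac{b_2}{a_2}\ge 1,$$ then $\mathcal{R}$ is a convex set; when equality holds, $\mathcal{R}$ is the triangle $\{(\lambda_1,\lambda_2)\in\mathbb{R}_{\ge0}^2:\lambda_1/a_1+\lambda_2/a_2<1\}$ (the time-sharing region).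
   Context: $\mathcal{R}$ is the stability region of the two-user interference channel with bursty traffic, where $a_i$ is the probability that destination $D_i$ decodes the packet of source $S_i$ when only $S_i$ transmits and $b_i$ is the corresponding probability when both sources transmit. *)

theory Defs
  imports "HOL-Analysis.Analysis"
begin

definition stabR1 :: "real \<Rightarrow> real \<Rightarrow> real \<Rightarrow> real \<Rightarrow> (real \<times> real) set" where
  "stabR1 a1 a2 b1 b2 = {(l1, l2). 0 \<le> l1 \<and> 0 \<le> l2 \<and>
     l1 / a1 + (a1 - b1) * l2 / (a1 * b2) < 1 \<and> l2 < b2}"

definition stabR2 :: "real \<Rightarrow> real \<Rightarrow> real \<Rightarrow> real \<Rightarrow> (real \<times> real) set" where
  "stabR2 a1 a2 b1 b2 = {(l1, l2). 0 \<le> l1 \<and> 0 \<le> l2 \<and>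
     l2 / a2 + (a2 - b2) * l1 / (a2 * b1) < 1 \<and> l1 < b1}"

definition stabR :: "real \<Rightarrow> real \<Rightarrow> real \<Rightarrow> real \<Rightarrow> (real \<times> real) set" where
  "stabR a1 a2 b1 b2 = stabR1 a1 a2 b1 b2 \<union> stabR2 a1 a2 b1 b2"

definition timeshare :: "real \<Rightarrow> real \<Rightarrow> (real \<times> real) set" where
  "timeshare a1 a2 = {(l1, l2). 0 \<le> l1 \<and> 0 \<le> l2 \<and> l1 / a1 + l2 / a2 < 1}"

end

theory Submission
  imports Defs
begin

text \<open>Under \<open>b1/a1 + b2/a2 \<ge> 1\<close> the cap \<open>\<lambda>2 < b2\<close> of \<open>\<R>\<^sub>1\<close> makes the second
  linear constraint redundant there, and symmetrically for \<open>\<R>\<^sub>2\<close>; conversely a point satisfying both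
  linear constraints automatically satisfies one of the caps. Hence \<open>\<R>\<close> is the intersection of four
  half-planes, so it is convex. When equality holds both linear constraints coincide with the
  time-sharing constraint.\<close>

definition stab_polygon :: "real \<Rightarrow> real \<Rightarrow> real \<Rightarrow> real \<Rightarrow> (real \<times> real) set" where
  "stab_polygon a1 a2 b1 b2 = {(l1, l2). 0 \<le> l1 \<and> 0 \<le> l2 \<and>
     l1 / a1 + (a1 - b1) * l2 / (a1 * b2) < 1 \<and> l2 / a2 + (a2 - b2) * l1 / (a2 * b1) < 1}"

lemma convex_stab_polygon: "convex (stab_polygon a1 a2 b1 b2)"
proof -
  have "stab_polygon a1 a2 b1 b2 =
      {x. inner (-1, 0) x \<le> 0} \<inter> {x. inner (0, -1) x \<le> 0} \<inter>
      {x. inner (1 / a1, (a1 - b1) / (a1 * b2)) x < 1} \<inter>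
      {x. inner ((a2 - b2) / (a2 * b1), 1 / a2) x < 1}"
    by (auto simp: stab_polygon_def inner_prod_def mult.commute)
  then show ?thesis
    by (simp add: convex_Int convex_halfspace_le convex_halfspace_lt)
qed

lemma weighted_bound_iff:
  fixes a b c x y :: real
  assumes "0 < a" "0 < b"
  shows "x / a + c * y / (a * b) < 1 \<longleftrightarrow> b * x + c * y < a * b"
  using assms by (simp add: field_simps)

lemma capped_constraint_implies_other:
  fixes a1 a2 b1 b2 x y :: real
  assumes "0 < b1" "b1 \<le> a1" "0 < b2" "b2 \<le> a2" "b1 / a1 + b2 / a2 \<ge> 1"
    and "x / a1 + (a1 - b1) * y / (a1 * b2) < 1" "y < b2"
  shows "y / a2 + (a2 - b2) * x / (a2 * b1) < 1"
proof -
  have "0 < a1" "0 < a2" using assms by linarith+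
  have first: "b2 * x + (a1 - b1) * y < a1 * b2"
    using assms(6) weighted_bound_iff[OF \<open>0 < a1\<close> \<open>0 < b2\<close>] by simp
  define D where "D = a2 * b1 + a1 * b2 - a1 * a2"
  have "D \<ge> 0"
    using assms(5) \<open>0 < a1\<close> \<open>0 < a2\<close> by (simp add: D_def field_simps)
  have identity: "b2 * (b1 * y + (a2 - b2) * x - a2 * b1)
      = (a2 - b2) * (b2 * x + (a1 - b1) * y - a1 * b2) - D * (b2 - y)"
    by (simp add: D_def algebra_simps)
  have "b1 * y + (a2 - b2) * x < a2 * b1"
  proof (cases "b2 = a2")
    case True
    then show ?thesis using assms(1,7) by simp
  next
    case False
    then have "(a2 - b2) * (b2 * x + (a1 - b1) * y - a1 * b2) < 0"
      using assms(4) first by (simp add: mult_pos_neg)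
    moreover have "D * (b2 - y) \<ge> 0" using \<open>D \<ge> 0\<close> assms(7) by simp
    ultimately have "b2 * (b1 * y + (a2 - b2) * x - a2 * b1) < 0"
      using identity by linarith
    then show ?thesis using assms(3) by (simp add: mult_less_0_iff)
  qed
  then show ?thesis
    using weighted_bound_iff[OF \<open>0 < a2\<close> assms(1)] by simp
qed

lemma constraint_forces_cap:
  fixes a1 b1 b2 x y :: real
  assumes "0 < b1" "b1 \<le> a1" "0 < b2"
    and "x / a1 + (a1 - b1) * y / (a1 * b2) < 1" "b2 \<le> y"
  shows "x < b1"
proof -
  have "0 < a1" using assms by linarith
  have "b2 * x + (a1 - b1) * y < a1 * b2"
    using assms(4) weighted_bound_iff[OF \<open>0 < a1\<close> assms(3)] by simp
  moreover have "(a1 - b1) * b2 \<le> (a1 - b1) * y"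
    using assms(2,5) by (simp add: mult_left_mono)
  ultimately have "b2 * x < b2 * b1" by (simp add: algebra_simps)
  then show ?thesis using assms(3) by simp
qed

lemma stabR_eq_stab_polygon:
  fixes a1 a2 b1 b2 :: real
  assumes "0 < b1" "b1 \<le> a1" "0 < b2" "b2 \<le> a2" "b1 / a1 + b2 / a2 \<ge> 1"
  shows "stabR a1 a2 b1 b2 = stab_polygon a1 a2 b1 b2"
proof -
  have swapped: "b2 / a2 + b1 / a1 \<ge> 1" using assms(5) by simp
  have "(x, y) \<in> stabR a1 a2 b1 b2 \<longleftrightarrow> (x, y) \<in> stab_polygon a1 a2 b1 b2" for x y
  proof
    assume "(x, y) \<in> stabR a1 a2 b1 b2"
    then consider "(x, y) \<in> stabR1 a1 a2 b1 b2" | "(x, y) \<in> stabR2 a1 a2 b1 b2"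
      unfolding stabR_def by blast
    then show "(x, y) \<in> stab_polygon a1 a2 b1 b2"
    proof cases
      case 1
      then show ?thesis
        using capped_constraint_implies_other[OF assms] by (simp add: stabR1_def stab_polygon_def)
    next
      case 2
      then show ?thesis
        using capped_constraint_implies_other[OF assms(3,4,1,2) swapped]
        by (simp add: stabR2_def stab_polygon_def)
    qed
  next
    assume polygon: "(x, y) \<in> stab_polygon a1 a2 b1 b2"
    show "(x, y) \<in> stabR a1 a2 b1 b2"
    proof (cases "x < b1")
      case True
      then show ?thesis using polygon by (simp add: stabR_def stabR2_def stab_polygon_def)
    next
      case False
      then have "y < b2"
        using polygon constraint_forces_cap[OF assms(1,2,3)] by (force simp: stab_polygon_def)
      then show ?thesis using polygon by (simp add: stabR_def stabR1_def stab_polygon_def)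
    qed
  qed
  then show ?thesis by auto
qed

lemma stab_polygon_eq_timeshare:
  fixes a1 a2 b1 b2 :: real
  assumes "0 < b1" "b1 \<le> a1" "0 < b2" "b2 \<le> a2" "b1 / a1 + b2 / a2 = 1"
  shows "stab_polygon a1 a2 b1 b2 = timeshare a1 a2"
proof -
  have "0 < a1" "0 < a2" using assms by linarith+
  then have sum: "a1 * a2 = a2 * b1 + a1 * b2"
    using assms(5) by (simp add: field_simps)
  have "(a1 - b1) * y / (a1 * b2) = y / a2" for y
  proof -
    have "a2 * ((a1 - b1) * y) = (a1 * a2 - a2 * b1) * y" by (simp add: algebra_simps)
    also have "\<dots> = a1 * b2 * y" using sum by simp
    finally have "a2 * ((a1 - b1) * y) = a1 * b2 * y" .
    then show ?thesis using \<open>0 < a1\<close> \<open>0 < a2\<close> assms(3) by (simp add: field_simps)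
  qed
  moreover have "(a2 - b2) * x / (a2 * b1) = x / a1" for x
  proof -
    have "a1 * ((a2 - b2) * x) = (a1 * a2 - a1 * b2) * x" by (simp add: algebra_simps)
    also have "\<dots> = a2 * b1 * x" using sum by simp
    finally have "a1 * ((a2 - b2) * x) = a2 * b1 * x" .
    then show ?thesis using \<open>0 < a1\<close> \<open>0 < a2\<close> assms(1) by (simp add: field_simps)
  qed
  ultimately show ?thesis
    by (auto simp: stab_polygon_def timeshare_def add.commute)
qed

theorem mainTheorem5:
  fixes a1 a2 b1 b2 :: real
  assumes "0 < b1" "b1 \<le> a1" "a1 \<le> 1"
      and "0 < b2" "b2 \<le> a2" "a2 \<le> 1"
      and "b1 / a1 + b2 / a2 \<ge> 1"
  shows "convex (stabR a1 a2 b1 b2) \<and>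
         (b1 / a1 + b2 / a2 = 1 \<longrightarrow> stabR a1 a2 b1 b2 = timeshare a1 a2)"
  using stabR_eq_stab_polygon[OF assms(1,2,4,5,7)] convex_stab_polygon
    stab_polygon_eq_timeshare[OF assms(1,2,4,5)]
  by simp

end
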